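(* Let $\mathtt b\ge2$ and $\mathrm o\in\mathbb W^*_{\mathtt b}$ with $|\mathrm o|=0$. Let $(Y_n)_{n\in\mathbb N}$ be a Markov chain on $\mathbb W^*_{\mathtt b}$ with transition kernel $p_{\mathtt b}$ and $Y_0=\mathrm o$. Let $f:[0,\infty)\to[0,1]$ satisfy $\sum_{p\in\mathbb N}\sqrt{f(p)}<\infty$. Then almost surely $\sum_{n\in\mathbb N}f\big(-|\mathrm o\wedge Y_n|\big)<\infty$.
   Context: $\mathbb W^*_{\mathtt b}$: sequences $x=(a_k)_{k\le m}$, $m\in\mathbb Z$, with $a_k\in\{1,\dots,\mathtt b\}$; $|x|=m$ is the (relative) height; parent $\overleftarrow x=(a_k)_{k\le m-1}$; children $x\ast(i)$ obtained by appending letter $i$ at index $m+1$. Kernel $p_{\mathtt b}(x,\cdot)$: to $\overleftarrow x$ w.p. $1/2$, to each $x\ast(i)$ w.p. $1/(2\mathtt b)$. For $x,y$ coinciding at all sufficiently negative indices, $x\wedge y=(a_k)_{k\le b}$ with $b$ the largest integer such that $x$ and $y$ agree at all indices $\le b$ (this holds for $\mathrm o$ and $Y_n$). *)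

theory Defs
  imports "HOL-Probability.Probability"
begin

text \<open>A word x = (a_k)_{k <= m} in W*_b is encoded as the pair (m, a) where
  a :: int => nat gives the letters a k for k <= m; letters beyond the height are
  normalised to 0.\<close>
type_synonym word = "int \<times> (int \<Rightarrow> nat)"

definition words :: "nat \<Rightarrow> word set" where
  "words b = {(m, a). (\<forall>k\<le>m. a k \<in> {1..b}) \<and> (\<forall>k>m. a k = 0)}"

definition height :: "word \<Rightarrow> int" where
  "height x = fst x"

definition parent :: "word \<Rightarrow> word" where
  "parent x = (fst x - 1, (snd x)(fst x := 0))"

definition child :: "word \<Rightarrow> nat \<Rightarrow> word" where
  "child x i = (fst x + 1, (snd x)(fst x + 1 := i))"

definition kernel :: "nat \<Rightarrow> word \<Rightarrow> word \<Rightarrow> real" where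
  "kernel b x y =
     (if y = parent x then 1/2
      else if (\<exists>i\<in>{1..b}. y = child x i) then 1 / (2 * real b)
      else 0)"

definition meet_height :: "word \<Rightarrow> word \<Rightarrow> int" where
  "meet_height x y =
     (GREATEST c. c \<le> fst x \<and> c \<le> fst y \<and> (\<forall>k\<le>c. snd x k = snd y k))"

definition markov_chain :: "'s measure \<Rightarrow> (nat \<Rightarrow> 's \<Rightarrow> word)
     \<Rightarrow> (word \<Rightarrow> word \<Rightarrow> real) \<Rightarrow> word \<Rightarrow> bool" where
  "markov_chain M Y p r \<longleftrightarrow>
     prob_space M \<and>
     (\<forall>n. Y n \<in> measurable M (count_space UNIV)) \<and>
     measure M {\<omega> \<in> space M. Y 0 \<omega> = r} = 1 \<and>
     (\<forall>n (xs :: nat \<Rightarrow> word) y.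
        measure M {\<omega> \<in> space M. (\<forall>i\<le>n. Y i \<omega> = xs i) \<and> Y (Suc n) \<omega> = y}
        = measure M {\<omega> \<in> space M. \<forall>i\<le>n. Y i \<omega> = xs i} * p (xs n) y)"

end

theory Submission
  imports Defs
begin

text \<open>Follow Y n through its coordinates (p, d) relative to the root o: the meet of o and
  Y n lies p = - height (o \<and> Y n) levels below o, and Y n lies d levels above that meet. These
  coordinates form a Markov chain on pairs of naturals, and explicit potentials for it show that
  every state (p, d) is visited at most 4 times in expectation, and that at level p the depth d is
  reached with probability at most 2 / (d + 2). Cut level p at depth D p = ceiling (1 / sqrt (f p)).
  Visits below the cut contribute at most 4 f(p) D(p) \<le> 8 sqrt (f p) to the expected sum. The
  levels whose cut is ever crossed have expected number at most the sum of 2 sqrt (f p), so almost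
  surely there are finitely many of them, and each of them is visited only finitely often, since
  almost surely the depth reached along any level is bounded.\<close>

section \<open>Markov chains with finitely supported steps\<close>

definition next_expectation ::
    "(word \<Rightarrow> word \<Rightarrow> real) \<Rightarrow> (word \<Rightarrow> word set) \<Rightarrow> (word \<Rightarrow> ennreal) \<Rightarrow> word \<Rightarrow> ennreal" where
  "next_expectation p S g x = (\<Sum>y\<in>S x. ennreal (p x y) * g y)"

lemma next_expectation_cmult:
  "next_expectation p S (\<lambda>y. c * g y) x = c * next_expectation p S g x"
  by (simp add: next_expectation_def sum_distrib_left mult.left_commute)

locale locally_finite_chain =
  fixes M :: "'s measure" and Y :: "nat \<Rightarrow> 's \<Rightarrow> word"
    and p :: "word \<Rightarrow> word \<Rightarrow> real" and r :: word and S :: "word \<Rightarrow> word set"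
  assumes markov: "markov_chain M Y p r"
    and finite_S: "finite (S x)"
    and p_nonneg: "0 \<le> p x y"
    and sum_p_S: "(\<Sum>y\<in>S x. p x y) = 1"
begin

sublocale prob_space M
  using markov by (simp add: markov_chain_def)

lemma measurable_Y: "Y n \<in> M \<rightarrow>\<^sub>M count_space UNIV"
  using markov by (simp add: markov_chain_def)

lemma measurable_comp_Y [measurable]: "(\<lambda>\<omega>. g (Y n \<omega>)) \<in> M \<rightarrow>\<^sub>M count_space UNIV"
  using measurable_Y by (rule measurable_compose) simp

lemma borel_measurable_comp_Y [measurable]: "(\<lambda>\<omega>. g (Y n \<omega>)) \<in> borel_measurable M"
  using measurable_Y by (rule measurable_compose) simp

lemma AE_Y0: "AE \<omega> in M. Y 0 \<omega> = r"
proof -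
  have "prob {\<omega> \<in> space M. Y 0 \<omega> = r} = 1"
    using markov by (simp add: markov_chain_def)
  from AE_prob_1[OF this] show ?thesis
    by eventually_elim simp
qed

definition cylinder :: "(nat \<Rightarrow> word) \<Rightarrow> nat \<Rightarrow> 's set" where
  "cylinder xs N = {\<omega> \<in> space M. \<forall>i\<le>N. Y i \<omega> = xs i}"

lemma sets_cylinder [measurable]: "cylinder xs N \<in> sets M"
  unfolding cylinder_def by measurable

lemma cylinder_Suc: "cylinder xs N \<inter> {\<omega> \<in> space M. Y (Suc N) \<omega> = y} = cylinder (xs(Suc N := y)) (Suc N)"
  by (auto simp: cylinder_def le_Suc_eq)

lemma emeasure_cylinder_Suc:
  "emeasure M (cylinder xs N \<inter> {\<omega> \<in> space M. Y (Suc N) \<omega> = y})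
     = ennreal (p (xs N) y) * emeasure M (cylinder xs N)"
proof -
  have "cylinder xs N \<inter> {\<omega> \<in> space M. Y (Suc N) \<omega> = y}
      = {\<omega> \<in> space M. (\<forall>i\<le>N. Y i \<omega> = xs i) \<and> Y (Suc N) \<omega> = y}"
    by (auto simp: cylinder_def)
  then have "prob (cylinder xs N \<inter> {\<omega> \<in> space M. Y (Suc N) \<omega> = y}) = prob (cylinder xs N) * p (xs N) y"
    using markov unfolding markov_chain_def cylinder_def by presburger
  then show ?thesis
    by (simp add: emeasure_eq_measure ennreal_mult p_nonneg mult.commute)
qed

text \<open>Paths of length N are padded with r beyond N, so that a finite set of functions
  describes all of them.\<close>
definition paths :: "nat \<Rightarrow> (nat \<Rightarrow> word) set" where
  "paths N = {xs. xs 0 = r \<and> (\<forall>i<N. xs (Suc i) \<in> S (xs i)) \<and> (\<forall>i>N. xs i = r)}"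

definition trajectory :: "nat \<Rightarrow> 's \<Rightarrow> nat \<Rightarrow> word" where
  "trajectory N \<omega> i = (if i \<le> N then Y i \<omega> else r)"

lemma paths_0: "paths 0 = {\<lambda>_. r}"
  by (auto simp: paths_def fun_eq_iff) (metis gr0I)

lemma paths_Suc:
  "paths (Suc N) = (\<lambda>(xs, y). xs(Suc N := y)) ` (SIGMA xs:paths N. S (xs N))"
proof (intro set_eqI iffI)
  fix zs assume zs: "zs \<in> paths (Suc N)"
  then have "(zs(Suc N := r), zs (Suc N)) \<in> (SIGMA xs:paths N. S (xs N))"
    by (auto simp: paths_def)
  then show "zs \<in> (\<lambda>(xs, y). xs(Suc N := y)) ` (SIGMA xs:paths N. S (xs N))"
    by (rule rev_image_eqI) simp
qed (auto simp: paths_def less_Suc_eq)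

lemma inj_on_extend_path: "inj_on (\<lambda>(xs, y). xs(Suc N := y)) (SIGMA xs:paths N. S (xs N))"
proof (rule inj_onI, clarify)
  fix xs y xs' y'
  assume paths: "xs \<in> paths N" "xs' \<in> paths N" and eq: "xs(Suc N := y) = xs'(Suc N := y')"
  have "xs i = xs' i" for i
    using paths fun_cong[OF eq, of i] by (cases "i = Suc N") (auto simp: paths_def)
  then show "xs = xs' \<and> y = y'"
    using fun_cong[OF eq, of "Suc N"] by auto
qed

lemma finite_paths: "finite (paths N)"
  by (induction N) (simp_all add: paths_0 paths_Suc finite_S)

lemma mem_cylinder_iff:
  "xs \<in> paths N \<Longrightarrow> \<omega> \<in> cylinder xs N \<longleftrightarrow> \<omega> \<in> space M \<and> trajectory N \<omega> = xs"
  by (auto simp: cylinder_def trajectory_def paths_def fun_eq_iff)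

lemma trajectory_in_eq_UN:
  "P \<subseteq> paths N \<Longrightarrow> {\<omega> \<in> space M. trajectory N \<omega> \<in> P} = (\<Union>xs\<in>P. cylinder xs N)"
proof (intro set_eqI iffI)
  fix \<omega> assume "P \<subseteq> paths N" "\<omega> \<in> {\<omega> \<in> space M. trajectory N \<omega> \<in> P}"
  then show "\<omega> \<in> (\<Union>xs\<in>P. cylinder xs N)"
    using mem_cylinder_iff by (intro UN_I[of "trajectory N \<omega>"]) auto
qed (use mem_cylinder_iff in auto)

lemma emeasure_trajectory_in:
  assumes "P \<subseteq> paths N"
  shows "emeasure M {\<omega> \<in> space M. trajectory N \<omega> \<in> P} = (\<Sum>xs\<in>P. emeasure M (cylinder xs N))"
proof -
  have "disjoint_family_on (\<lambda>xs. cylinder xs N) P"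
    unfolding disjoint_family_on_def
  proof (intro ballI impI)
    fix xs xs' assume "xs \<in> P" "xs' \<in> P" "xs \<noteq> xs'"
    with assms show "cylinder xs N \<inter> cylinder xs' N = {}"
      by (auto simp: mem_cylinder_iff subset_iff)
  qed
  then show ?thesis
    unfolding trajectory_in_eq_UN[OF assms]
    by (intro sum_emeasure[symmetric] finite_subset[OF assms finite_paths]) auto
qed

lemma emeasure_trajectory_paths: "emeasure M {\<omega> \<in> space M. trajectory N \<omega> \<in> paths N} = 1"
proof (induction N)
  case 0
  have "{\<omega> \<in> space M. trajectory 0 \<omega> \<in> paths 0} = {\<omega> \<in> space M. Y 0 \<omega> = r}"
    by (auto simp: paths_0 trajectory_def fun_eq_iff)
  also have "emeasure M \<dots> = 1"
    using AE_Y0 by (subst prob_space.emeasure_eq_1_AE) (auto intro: prob_space_axioms)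
  finally show ?case .
next
  case (Suc N)
  have "emeasure M {\<omega> \<in> space M. trajectory (Suc N) \<omega> \<in> paths (Suc N)}
      = (\<Sum>zs\<in>paths (Suc N). emeasure M (cylinder zs (Suc N)))"
    by (rule emeasure_trajectory_in) simp
  also have "\<dots> = (\<Sum>(xs, y)\<in>(SIGMA xs:paths N. S (xs N)). emeasure M (cylinder (xs(Suc N := y)) (Suc N)))"
    unfolding paths_Suc by (subst sum.reindex[OF inj_on_extend_path]) (simp add: comp_def case_prod_unfold)
  also have "\<dots> = (\<Sum>xs\<in>paths N. \<Sum>y\<in>S (xs N). ennreal (p (xs N) y) * emeasure M (cylinder xs N))"
    by (simp add: sum.Sigma[symmetric] finite_paths finite_S cylinder_Suc[symmetric] emeasure_cylinder_Suc)
  also have "\<dots> = (\<Sum>xs\<in>paths N. emeasure M (cylinder xs N))"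
    by (simp add: sum_distrib_right[symmetric] sum_ennreal p_nonneg sum_p_S)
  also have "\<dots> = 1"
    using Suc by (simp add: emeasure_trajectory_in)
  finally show ?case .
qed

lemma AE_trajectory_paths: "AE \<omega> in M. trajectory N \<omega> \<in> paths N"
proof -
  have "{\<omega> \<in> space M. trajectory N \<omega> \<in> paths N} \<in> sets M"
    unfolding trajectory_in_eq_UN[OF order_refl] by (intro sets.finite_UN finite_paths) auto
  then have "prob {\<omega> \<in> space M. trajectory N \<omega> \<in> paths N} = 1"
    using emeasure_trajectory_paths by (simp add: emeasure_eq_measure)
  from AE_prob_1[OF this] show ?thesis
    by eventually_elim simp
qed

lemma AE_step_in_S: "AE \<omega> in M. \<forall>n. Y (Suc n) \<omega> \<in> S (Y n \<omega>)"
  unfolding AE_all_countable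
proof
  fix n
  show "AE \<omega> in M. Y (Suc n) \<omega> \<in> S (Y n \<omega>)"
    using AE_trajectory_paths[of "Suc n"] by eventually_elim (auto simp: paths_def trajectory_def)
qed

lemma AE_invariant:
  assumes "r \<in> R" and "\<And>x. x \<in> R \<Longrightarrow> S x \<subseteq> R"
  shows "AE \<omega> in M. \<forall>n. Y n \<omega> \<in> R"
  using AE_Y0 AE_step_in_S
proof eventually_elim
  case (elim \<omega>)
  show ?case
  proof
    fix n show "Y n \<omega> \<in> R"
    proof (induction n)
      case (Suc n)
      then show ?case
        using elim(2) assms(2) by blast
    qed (use elim(1) assms(1) in simp)
  qed
qed

lemma nn_integral_at_cylinder:
  "(\<integral>\<^sup>+\<omega>. h (Y N \<omega>) * indicator (cylinder xs N) \<omega> \<partial>M) = h (xs N) * emeasure M (cylinder xs N)"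
proof -
  have "(\<integral>\<^sup>+\<omega>. h (Y N \<omega>) * indicator (cylinder xs N) \<omega> \<partial>M)
      = (\<integral>\<^sup>+\<omega>. h (xs N) * indicator (cylinder xs N) \<omega> \<partial>M)"
    by (rule nn_integral_cong) (auto simp: cylinder_def indicator_def)
  then show ?thesis
    by (simp add: nn_integral_cmult_indicator)
qed

lemma nn_integral_next_cylinder:
  "(\<integral>\<^sup>+\<omega>. g (Y (Suc N) \<omega>) * indicator (cylinder xs N) \<omega> \<partial>M)
     = next_expectation p S g (xs N) * emeasure M (cylinder xs N)"
proof -
  define step where "step y = cylinder xs N \<inter> {\<omega> \<in> space M. Y (Suc N) \<omega> = y}" for y
  have sets_step [measurable]: "step y \<in> sets M" for y
    unfolding step_def by measurable
  have "AE \<omega> in M. g (Y (Suc N) \<omega>) * indicator (cylinder xs N) \<omega>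
      = (\<Sum>y\<in>S (xs N). g y * indicator (step y) \<omega>)"
    using AE_step_in_S
  proof eventually_elim
    case (elim \<omega>)
    show ?case
    proof (cases "\<omega> \<in> cylinder xs N")
      case True
      then have "Y N \<omega> = xs N"
        by (simp add: cylinder_def)
      then have "Y (Suc N) \<omega> \<in> S (xs N)"
        using elim by metis
      moreover have "g y * indicator (step y) \<omega> = (if y = Y (Suc N) \<omega> then g y else 0)" for y
        using True by (auto simp: step_def cylinder_def)
      ultimately show ?thesis
        using True by (simp add: finite_S)
    qed (simp add: step_def)
  qed
  then have "(\<integral>\<^sup>+\<omega>. g (Y (Suc N) \<omega>) * indicator (cylinder xs N) \<omega> \<partial>M)
      = (\<integral>\<^sup>+\<omega>. (\<Sum>y\<in>S (xs N). g y * indicator (step y) \<omega>) \<partial>M)"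
    by (rule nn_integral_cong_AE)
  also have "\<dots> = (\<Sum>y\<in>S (xs N). g y * emeasure M (step y))"
    by (subst nn_integral_sum) (simp_all add: nn_integral_cmult_indicator)
  also have "\<dots> = next_expectation p S g (xs N) * emeasure M (cylinder xs N)"
    by (simp add: step_def emeasure_cylinder_Suc next_expectation_def sum_distrib_left sum_distrib_right mult_ac)
  finally show ?thesis .
qed

definition determined_upto :: "nat \<Rightarrow> 's set \<Rightarrow> bool" where
  "determined_upto N A \<longleftrightarrow> (\<forall>\<omega>\<in>A. \<forall>\<omega>'\<in>space M. (\<forall>i\<le>N. Y i \<omega>' = Y i \<omega>) \<longrightarrow> \<omega>' \<in> A)"

lemma AE_indicator_eq_sum_cylinders:
  assumes determined: "determined_upto N A"
  shows "AE \<omega> in M. indicator A \<omega>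
    = (\<Sum>xs\<in>{xs \<in> paths N. cylinder xs N \<subseteq> A}. indicator (cylinder xs N) \<omega> :: ennreal)"
  using AE_trajectory_paths[of N] AE_space
proof eventually_elim
  case (elim \<omega>)
  let ?P = "{xs \<in> paths N. cylinder xs N \<subseteq> A}"
  have "trajectory N \<omega> \<in> ?P \<longleftrightarrow> \<omega> \<in> A"
  proof
    assume "trajectory N \<omega> \<in> ?P"
    then show "\<omega> \<in> A"
      using elim by (auto simp: mem_cylinder_iff)
  next
    assume "\<omega> \<in> A"
    then have "cylinder (trajectory N \<omega>) N \<subseteq> A"
      using determined by (auto simp: determined_upto_def cylinder_def trajectory_def)
    then show "trajectory N \<omega> \<in> ?P"
      using elim by simp
  qed
  moreover have "indicator (cylinder xs N) \<omega> = (if xs = trajectory N \<omega> then 1 else 0 :: ennreal)"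
    if "xs \<in> ?P" for xs
    using that elim by (auto simp: mem_cylinder_iff)
  ultimately show ?case
    using finite_paths[of N] by (simp add: indicator_def)
qed

theorem nn_integral_markov:
  assumes determined: "determined_upto N A"
  shows "(\<integral>\<^sup>+\<omega>. g (Y (Suc N) \<omega>) * indicator A \<omega> \<partial>M)
    = (\<integral>\<^sup>+\<omega>. next_expectation p S g (Y N \<omega>) * indicator A \<omega> \<partial>M)"
proof -
  let ?P = "{xs \<in> paths N. cylinder xs N \<subseteq> A}"
  have split: "(\<integral>\<^sup>+\<omega>. F \<omega> * indicator A \<omega> \<partial>M)
      = (\<Sum>xs\<in>?P. \<integral>\<^sup>+\<omega>. F \<omega> * indicator (cylinder xs N) \<omega> \<partial>M)"
    if "F \<in> borel_measurable M" for F
  proof -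
    from AE_indicator_eq_sum_cylinders[OF determined]
    have "AE \<omega> in M. F \<omega> * indicator A \<omega> = (\<Sum>xs\<in>?P. F \<omega> * indicator (cylinder xs N) \<omega>)"
      by eventually_elim (simp add: sum_distrib_left)
    then have "(\<integral>\<^sup>+\<omega>. F \<omega> * indicator A \<omega> \<partial>M)
        = (\<integral>\<^sup>+\<omega>. (\<Sum>xs\<in>?P. F \<omega> * indicator (cylinder xs N) \<omega>) \<partial>M)"
      by (rule nn_integral_cong_AE)
    also have "\<dots> = (\<Sum>xs\<in>?P. \<integral>\<^sup>+\<omega>. F \<omega> * indicator (cylinder xs N) \<omega> \<partial>M)"
      using that by (intro nn_integral_sum borel_measurable_times_ennreal borel_measurable_indicator) simp_all
    finally show ?thesis .
  qed
  show ?thesis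
    by (simp add: split nn_integral_next_cylinder nn_integral_at_cylinder)
qed

corollary nn_integral_markov_space:
  "(\<integral>\<^sup>+\<omega>. g (Y (Suc N) \<omega>) \<partial>M) = (\<integral>\<^sup>+\<omega>. next_expectation p S g (Y N \<omega>) \<partial>M)"
proof -
  have "(\<integral>\<^sup>+\<omega>. g (Y (Suc N) \<omega>) \<partial>M) = (\<integral>\<^sup>+\<omega>. g (Y (Suc N) \<omega>) * indicator (space M) \<omega> \<partial>M)"
    by (rule nn_integral_cong) simp
  also have "\<dots> = (\<integral>\<^sup>+\<omega>. next_expectation p S g (Y N \<omega>) * indicator (space M) \<omega> \<partial>M)"
    by (rule nn_integral_markov) (simp add: determined_upto_def)
  also have "\<dots> = (\<integral>\<^sup>+\<omega>. next_expectation p S g (Y N \<omega>) \<partial>M)"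
    by (rule nn_integral_cong) simp
  finally show ?thesis .
qed

lemma nn_integral_Y0: "(\<integral>\<^sup>+\<omega>. g (Y 0 \<omega>) \<partial>M) = g r"
proof -
  have "AE \<omega> in M. g (Y 0 \<omega>) = g r"
    using AE_Y0 by eventually_elim simp
  then have "(\<integral>\<^sup>+\<omega>. g (Y 0 \<omega>) \<partial>M) = (\<integral>\<^sup>+\<omega>. g r \<partial>M)"
    by (rule nn_integral_cong_AE)
  then show ?thesis
    by (simp add: emeasure_space_1)
qed

text \<open>The quantity E V(Y N) + (\<Sum>n<N. E w(Y n)) is nonincreasing in N.\<close>
lemma nn_integral_suminf_le_Lyapunov:
  assumes inv: "AE \<omega> in M. \<forall>n. Y n \<omega> \<in> R"
    and V: "\<And>x. x \<in> R \<Longrightarrow> next_expectation p S V x + w x \<le> V x"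
  shows "(\<integral>\<^sup>+\<omega>. (\<Sum>n. w (Y n \<omega>)) \<partial>M) \<le> V r"
proof -
  have step: "(\<integral>\<^sup>+\<omega>. V (Y (Suc N) \<omega>) \<partial>M) + (\<integral>\<^sup>+\<omega>. w (Y N \<omega>) \<partial>M) \<le> (\<integral>\<^sup>+\<omega>. V (Y N \<omega>) \<partial>M)" for N
  proof -
    have "AE \<omega> in M. next_expectation p S V (Y N \<omega>) + w (Y N \<omega>) \<le> V (Y N \<omega>)"
      using inv by eventually_elim (simp add: V)
    then have "(\<integral>\<^sup>+\<omega>. next_expectation p S V (Y N \<omega>) + w (Y N \<omega>) \<partial>M) \<le> (\<integral>\<^sup>+\<omega>. V (Y N \<omega>) \<partial>M)"
      by (rule nn_integral_mono_AE)
    then show ?thesis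
      by (simp add: nn_integral_markov_space nn_integral_add)
  qed
  have partial: "(\<integral>\<^sup>+\<omega>. V (Y N \<omega>) \<partial>M) + (\<Sum>n<N. \<integral>\<^sup>+\<omega>. w (Y n \<omega>) \<partial>M) \<le> V r" for N
  proof (induction N)
    case (Suc N)
    have "(\<integral>\<^sup>+\<omega>. V (Y (Suc N) \<omega>) \<partial>M) + (\<Sum>n<Suc N. \<integral>\<^sup>+\<omega>. w (Y n \<omega>) \<partial>M)
        = ((\<integral>\<^sup>+\<omega>. V (Y (Suc N) \<omega>) \<partial>M) + (\<integral>\<^sup>+\<omega>. w (Y N \<omega>) \<partial>M)) + (\<Sum>n<N. \<integral>\<^sup>+\<omega>. w (Y n \<omega>) \<partial>M)"
      by (simp add: ac_simps)
    also have "\<dots> \<le> (\<integral>\<^sup>+\<omega>. V (Y N \<omega>) \<partial>M) + (\<Sum>n<N. \<integral>\<^sup>+\<omega>. w (Y n \<omega>) \<partial>M)"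
      using step by (rule add_right_mono)
    also have "\<dots> \<le> V r"
      by (rule Suc.IH)
    finally show ?case .
  qed (simp add: nn_integral_Y0)
  have "(\<integral>\<^sup>+\<omega>. (\<Sum>n. w (Y n \<omega>)) \<partial>M) = (\<Sum>n. \<integral>\<^sup>+\<omega>. w (Y n \<omega>) \<partial>M)"
    by (rule nn_integral_suminf) simp
  also have "\<dots> \<le> V r"
  proof (rule suminf_le_const[OF summableI])
    fix N
    have "(\<Sum>n<N. \<integral>\<^sup>+\<omega>. w (Y n \<omega>) \<partial>M)
        \<le> (\<integral>\<^sup>+\<omega>. V (Y N \<omega>) \<partial>M) + (\<Sum>n<N. \<integral>\<^sup>+\<omega>. w (Y n \<omega>) \<partial>M)"
      by simp
    also have "\<dots> \<le> V r"
      by (rule partial)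
    finally show "(\<Sum>n<N. \<integral>\<^sup>+\<omega>. w (Y n \<omega>) \<partial>M) \<le> V r" .
  qed
  finally show ?thesis .
qed

definition hits_before :: "word set \<Rightarrow> nat \<Rightarrow> 's set" where
  "hits_before B N = {\<omega> \<in> space M. \<exists>n<N. Y n \<omega> \<in> B}"

lemma sets_hits_before [measurable]: "hits_before B N \<in> sets M"
  unfolding hits_before_def by measurable

text \<open>h (Y N), stopped when B is hit and replaced by its lower bound 1 from then on, is a
  supermartingale; this is its expectation.\<close>
lemma emeasure_hits_before_le:
  assumes inv: "AE \<omega> in M. \<forall>n. Y n \<omega> \<in> R"
    and super: "\<And>x. x \<in> R \<Longrightarrow> x \<notin> B \<Longrightarrow> next_expectation p S h x \<le> h x"
    and ge_1: "\<And>x. x \<in> R \<Longrightarrow> x \<in> B \<Longrightarrow> 1 \<le> h x"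
  shows "emeasure M (hits_before B N) + (\<integral>\<^sup>+\<omega>. h (Y N \<omega>) * indicator (space M - hits_before B N) \<omega> \<partial>M)
    \<le> h r"
proof (induction N)
  case 0
  have "(\<integral>\<^sup>+\<omega>. h (Y 0 \<omega>) * indicator (space M - hits_before B 0) \<omega> \<partial>M) = (\<integral>\<^sup>+\<omega>. h (Y 0 \<omega>) \<partial>M)"
    by (rule nn_integral_cong) (simp add: hits_before_def)
  then show ?case
    by (simp add: hits_before_def nn_integral_Y0)
next
  case (Suc N)
  let ?stopped = "\<lambda>N g \<omega>. indicator (hits_before B N) \<omega> + g \<omega> * indicator (space M - hits_before B N) \<omega>"
  have integral_stopped: "integral\<^sup>N M (?stopped N' g) = emeasure M (hits_before B N')
      + (\<integral>\<^sup>+\<omega>. g \<omega> * indicator (space M - hits_before B N') \<omega> \<partial>M)"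
    if "g \<in> borel_measurable M" for g N'
    using that by (subst nn_integral_add) auto
  have "(\<integral>\<^sup>+\<omega>. h (Y (Suc N) \<omega>) * indicator (space M - hits_before B (Suc N)) \<omega> \<partial>M)
      = (\<integral>\<^sup>+\<omega>. next_expectation p S h (Y N \<omega>) * indicator (space M - hits_before B (Suc N)) \<omega> \<partial>M)"
    by (rule nn_integral_markov) (auto simp: determined_upto_def hits_before_def less_Suc_eq_le)
  then have "emeasure M (hits_before B (Suc N))
      + (\<integral>\<^sup>+\<omega>. h (Y (Suc N) \<omega>) * indicator (space M - hits_before B (Suc N)) \<omega> \<partial>M)
      = integral\<^sup>N M (?stopped (Suc N) (\<lambda>\<omega>. next_expectation p S h (Y N \<omega>)))"
    by (simp add: integral_stopped)
  also have "\<dots> \<le> integral\<^sup>N M (?stopped N (\<lambda>\<omega>. h (Y N \<omega>)))"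
  proof (rule nn_integral_mono_AE)
    show "AE \<omega> in M. ?stopped (Suc N) (\<lambda>\<omega>. next_expectation p S h (Y N \<omega>)) \<omega> \<le> ?stopped N (\<lambda>\<omega>. h (Y N \<omega>)) \<omega>"
      using inv AE_space
    proof eventually_elim
      case (elim \<omega>)
      then show ?case
        using super[of "Y N \<omega>"] ge_1[of "Y N \<omega>"]
        by (cases "\<omega> \<in> hits_before B N"; cases "Y N \<omega> \<in> B")
          (auto simp: hits_before_def less_Suc_eq split: split_indicator)
    qed
  qed
  also have "\<dots> = emeasure M (hits_before B N)
      + (\<integral>\<^sup>+\<omega>. h (Y N \<omega>) * indicator (space M - hits_before B N) \<omega> \<partial>M)"
    by (simp add: integral_stopped)
  finally show ?case
    using Suc.IH by (rule order_trans)
qed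

lemma emeasure_hitting_le:
  assumes "AE \<omega> in M. \<forall>n. Y n \<omega> \<in> R"
    and "\<And>x. x \<in> R \<Longrightarrow> x \<notin> B \<Longrightarrow> next_expectation p S h x \<le> h x"
    and "\<And>x. x \<in> R \<Longrightarrow> x \<in> B \<Longrightarrow> 1 \<le> h x"
  shows "emeasure M {\<omega> \<in> space M. \<exists>n. Y n \<omega> \<in> B} \<le> h r"
proof -
  have "emeasure M (hits_before B N) \<le> h r" for N
    using add_increasing2[OF zero_le order_refl] emeasure_hits_before_le[OF assms] by (rule order_trans)
  moreover have "emeasure M (\<Union>N. hits_before B N) = (SUP N. emeasure M (hits_before B N))"
    by (rule SUP_emeasure_incseq[symmetric])
      (auto simp: incseq_def hits_before_def, meson le_trans less_le_trans)
  moreover have "{\<omega> \<in> space M. \<exists>n. Y n \<omega> \<in> B} = (\<Union>N. hits_before B N)"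
    by (auto simp: hits_before_def)
  ultimately show ?thesis
    by (simp add: SUP_least)
qed

end

section \<open>The walk in coordinates relative to the root\<close>

definition neighbours :: "nat \<Rightarrow> word \<Rightarrow> word set" where
  "neighbours b x = insert (parent x) (child x ` {1..b})"

lemma parent_ne_child: "parent x \<noteq> child x i"
  by (simp add: parent_def child_def)

lemma inj_child: "inj (child x)"
  by (rule injI) (simp add: child_def fun_eq_iff, metis)

lemma finite_neighbours: "finite (neighbours b x)"
  by (simp add: neighbours_def)

lemma sum_neighbours:
  "(\<Sum>y\<in>neighbours b x. F y) = F (parent x) + (\<Sum>i=1..b. F (child x i))"
proof -
  have "parent x \<notin> child x ` {1..b}"
    using parent_ne_child[of x] by blast
  then show ?thesis
    by (simp add: neighbours_def sum.reindex inj_on_subset[OF inj_child])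
qed

lemma kernel_nonneg: "0 \<le> kernel b x y"
  by (simp add: kernel_def)

lemma kernel_parent: "kernel b x (parent x) = 1 / 2"
  by (simp add: kernel_def)

lemma kernel_child: "i \<in> {1..b} \<Longrightarrow> kernel b x (child x i) = 1 / (2 * real b)"
  using parent_ne_child[of x i] by (auto simp: kernel_def)

lemma sum_kernel_neighbours: "0 < b \<Longrightarrow> (\<Sum>y\<in>neighbours b x. kernel b x y) = 1"
  by (simp add: sum_neighbours kernel_parent kernel_child)

lemma next_expectation_kernel:
  assumes "\<And>y. 0 \<le> V y"
  shows "next_expectation (kernel b) (neighbours b) (\<lambda>y. ennreal (V y)) x
    = ennreal (V (parent x) / 2 + (\<Sum>i=1..b. V (child x i)) / (2 * real b))"
proof -
  have "next_expectation (kernel b) (neighbours b) (\<lambda>y. ennreal (V y)) x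
      = ennreal (\<Sum>y\<in>neighbours b x. kernel b x y * V y)"
    using assms kernel_nonneg
    by (simp add: next_expectation_def sum_ennreal[symmetric] ennreal_mult)
  then show ?thesis
    by (simp add: sum_neighbours kernel_parent kernel_child sum_divide_distrib)
qed

definition agree_upto :: "word \<Rightarrow> word \<Rightarrow> int \<Rightarrow> bool" where
  "agree_upto x y c \<longleftrightarrow> c \<le> fst x \<and> c \<le> fst y \<and> (\<forall>k\<le>c. snd x k = snd y k)"

definition tail_equiv :: "word \<Rightarrow> word \<Rightarrow> bool" where
  "tail_equiv x y \<longleftrightarrow> (\<exists>K. \<forall>k\<le>K. snd x k = snd y k)"

lemma meet_height_eqI:
  "agree_upto x y c \<Longrightarrow> (\<And>c'. agree_upto x y c' \<Longrightarrow> c' \<le> c) \<Longrightarrow> meet_height x y = c"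
  unfolding meet_height_def agree_upto_def[symmetric] by (rule Greatest_equality)

lemma agree_upto_mono: "agree_upto x y c \<Longrightarrow> c' \<le> c \<Longrightarrow> agree_upto x y c'"
  by (auto simp: agree_upto_def)

lemma agree_upto_meet_height:
  assumes "tail_equiv x y"
  shows "agree_upto x y (meet_height x y)" and "agree_upto x y c \<Longrightarrow> c \<le> meet_height x y"
proof -
  obtain K where "\<forall>k\<le>K. snd x k = snd y k"
    using assms by (auto simp: tail_equiv_def)
  define c0 where "c0 = min K (min (fst x) (fst y))"
  have agree_c0: "agree_upto x y c0"
    using \<open>\<forall>k\<le>K. _\<close> by (auto simp: agree_upto_def c0_def)
  define C where "C = {c \<in> {c0..fst x}. agree_upto x y c}"
  have "finite C"
    by (rule finite_subset[of _ "{c0..fst x}"]) (auto simp: C_def)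
  moreover have "C \<noteq> {}"
    using agree_c0 by (auto simp: C_def agree_upto_def)
  ultimately have agree_Max: "agree_upto x y (Max C)"
    using Max_in[of C] by (simp add: C_def)
  have le_Max: "c \<le> Max C" if "agree_upto x y c" for c
  proof (cases "c0 \<le> c")
    case True
    with that \<open>finite C\<close> show ?thesis
      by (intro Max_ge) (auto simp: C_def agree_upto_def)
  next
    case False
    with Max_ge[OF \<open>finite C\<close>, of c0] agree_c0 show ?thesis
      by (simp add: C_def agree_upto_def)
  qed
  have "meet_height x y = Max C"
    using agree_Max le_Max by (rule meet_height_eqI)
  then show "agree_upto x y (meet_height x y)" "agree_upto x y c \<Longrightarrow> c \<le> meet_height x y"
    using agree_Max le_Max by simp_all
qed

lemma tail_equiv_parent: "tail_equiv x y \<Longrightarrow> tail_equiv x (parent y)"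
  unfolding tail_equiv_def
proof (elim exE)
  fix K assume "\<forall>k\<le>K. snd x k = snd y k"
  then show "\<exists>K. \<forall>k\<le>K. snd x k = snd (parent y) k"
    by (intro exI[of _ "min K (fst y - 1)"]) (simp add: parent_def)
qed

lemma tail_equiv_child: "tail_equiv x y \<Longrightarrow> tail_equiv x (child y i)"
  unfolding tail_equiv_def
proof (elim exE)
  fix K assume "\<forall>k\<le>K. snd x k = snd y k"
  then show "\<exists>K. \<forall>k\<le>K. snd x k = snd (child y i) k"
    by (intro exI[of _ "min K (fst y)"]) (simp add: child_def)
qed

lemma agree_upto_parent: "agree_upto x (parent y) c \<longleftrightarrow> agree_upto x y c \<and> c < fst y"
proof -
  have "snd (parent y) k = snd y k" if "k < fst y" for k
    using that by (simp add: parent_def)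
  then show ?thesis
    unfolding agree_upto_def by (force simp: parent_def)
qed

lemma snd_child_below: "k \<le> fst y \<Longrightarrow> snd (child y i) k = snd y k"
  by (simp add: child_def)

lemma agree_upto_child_le: "c \<le> fst y \<Longrightarrow> agree_upto x (child y i) c \<longleftrightarrow> agree_upto x y c"
  unfolding agree_upto_def using snd_child_below by (force simp: child_def)

lemma agree_upto_child_top:
  "agree_upto x (child y i) (fst y + 1) \<longleftrightarrow>
     fst y < fst x \<and> agree_upto x y (fst y) \<and> snd x (fst y + 1) = i"
proof -
  have le_Suc: "k \<le> fst y + 1 \<longleftrightarrow> k \<le> fst y \<or> k = fst y + 1" for k
    by linarith
  show ?thesis
    unfolding agree_upto_def le_Suc using snd_child_below by (force simp: child_def)
qed

lemma agree_upto_child_le_top: "agree_upto x (child y i) c \<Longrightarrow> c \<le> fst y + 1"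
  by (simp add: agree_upto_def child_def)

lemma meet_height_le: "tail_equiv x y \<Longrightarrow> meet_height x y \<le> fst x \<and> meet_height x y \<le> fst y"
  using agree_upto_meet_height(1) by (simp add: agree_upto_def)

lemma meet_height_parent:
  assumes "tail_equiv x y"
  shows "meet_height x (parent y) = min (meet_height x y) (fst y - 1)"
proof (rule meet_height_eqI)
  show "agree_upto x (parent y) (min (meet_height x y) (fst y - 1))"
    using agree_upto_meet_height(1)[OF assms] by (auto simp: agree_upto_parent intro: agree_upto_mono)
next
  fix c assume "agree_upto x (parent y) c"
  then show "c \<le> min (meet_height x y) (fst y - 1)"
    using agree_upto_meet_height(2)[OF assms] by (simp add: agree_upto_parent)
qed

lemma meet_height_child:
  assumes "tail_equiv x y"
  shows "meet_height x (child y i) =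
    (if meet_height x y = fst y \<and> fst y < fst x \<and> snd x (fst y + 1) = i then fst y + 1 else meet_height x y)"
proof (cases "meet_height x y = fst y \<and> fst y < fst x \<and> snd x (fst y + 1) = i")
  case True
  then have "meet_height x (child y i) = fst y + 1"
    using agree_upto_meet_height(1)[OF assms]
    by (intro meet_height_eqI) (auto simp: agree_upto_child_top dest: agree_upto_child_le_top)
  with True show ?thesis
    by simp
next
  case False
  have "meet_height x (child y i) = meet_height x y"
  proof (rule meet_height_eqI)
    show "agree_upto x (child y i) (meet_height x y)"
      using agree_upto_meet_height(1)[OF assms] meet_height_le[OF assms] by (simp add: agree_upto_child_le)
  next
    fix c assume c: "agree_upto x (child y i) c"
    show "c \<le> meet_height x y"
    proof (cases "c \<le> fst y")
      case True
      with c show ?thesis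
        using agree_upto_meet_height(2)[OF assms] by (simp add: agree_upto_child_le)
    next
      case not_le: False
      then have "c = fst y + 1"
        using agree_upto_child_le_top[OF c] by simp
      with c have "fst y < fst x \<and> agree_upto x y (fst y) \<and> snd x (fst y + 1) = i"
        by (simp add: agree_upto_child_top)
      then show ?thesis
        using False agree_upto_meet_height(2)[OF assms] meet_height_le[OF assms] by force
    qed
  qed
  with False show ?thesis
    by simp
qed

definition meet_coords :: "word \<Rightarrow> word \<Rightarrow> nat \<times> nat" where
  "meet_coords x y = (nat (fst x - meet_height x y), nat (fst y - meet_height x y))"

lemma fst_parent [simp]: "fst (parent y) = fst y - 1"
  by (simp add: parent_def)

lemma fst_child [simp]: "fst (child y i) = fst y + 1"
  by (simp add: child_def)

lemma meet_coords_parent: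
  assumes "tail_equiv x y"
  shows "meet_coords x (parent y) =
    (case meet_coords x y of (p, d) \<Rightarrow> if 0 < d then (p, d - 1) else (p + 1, 0))"
proof (cases "meet_height x y < fst y")
  case True
  then show ?thesis
    using meet_height_le[OF assms]
    by (simp add: meet_coords_def meet_height_parent[OF assms] min_def nat_diff_distrib')
next
  case False
  then have "meet_height x y = fst y" "fst y \<le> fst x"
    using meet_height_le[OF assms] by simp_all
  moreover have "nat (fst x - (fst y - 1)) = Suc (nat (fst x - fst y))"
    using \<open>fst y \<le> fst x\<close> by linarith
  ultimately show ?thesis
    by (simp add: meet_coords_def meet_height_parent[OF assms])
qed

lemma meet_coords_child:
  assumes "tail_equiv x y"
  shows "meet_coords x (child y i) =
    (case meet_coords x y of (p, d) \<Rightarrow>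
       if 0 < d then (p, d + 1) else if 0 < p \<and> i = snd x (fst y + 1) then (p - 1, 0) else (p, 1))"
  using meet_height_le[OF assms]
  by (cases "meet_height x y < fst y")
    (auto simp: meet_coords_def meet_height_child[OF assms] nat_diff_distrib')

text \<open>The transition operator of the coordinates (p, d) of the walk: from the meet (d = 0, p > 0)
  one of the b children leads back towards the reference word.\<close>
definition coord_op :: "nat \<Rightarrow> (nat \<times> nat \<Rightarrow> real) \<Rightarrow> nat \<times> nat \<Rightarrow> real" where
  "coord_op b V = (\<lambda>(p, d).
     if 0 < d then V (p, d - 1) / 2 + V (p, d + 1) / 2
     else if p = 0 then V (1, 0) / 2 + V (0, 1) / 2
     else V (p + 1, 0) / 2 + V (p - 1, 0) / (2 * real b) + (real b - 1) * V (p, 1) / (2 * real b))"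

lemma next_expectation_meet_coords:
  assumes "0 < b" and x: "x \<in> words b" and y: "tail_equiv x y" and "\<And>s. 0 \<le> V s"
  shows "next_expectation (kernel b) (neighbours b) (\<lambda>z. ennreal (V (meet_coords x z))) y
    = ennreal (coord_op b V (meet_coords x y))"
proof -
  obtain p d where pd: "meet_coords x y = (p, d)"
    by (cases "meet_coords x y")
  have "V (meet_coords x (parent y)) / 2 + (\<Sum>i=1..b. V (meet_coords x (child y i))) / (2 * real b)
      = coord_op b V (p, d)"
  proof (cases "0 < d \<or> p = 0")
    case True
    then have "(\<Sum>i=1..b. V (meet_coords x (child y i))) = real b * V (if 0 < d then (p, d + 1) else (0, 1))"
      using True meet_coords_child[OF y] pd by (cases "0 < d") simp_all
    with True show ?thesis
      using meet_coords_parent[OF y] pd \<open>0 < b\<close> by (auto simp: coord_op_def)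
  next
    case False
    then have "d = 0" "0 < p"
      by simp_all
    then have "fst y < fst x"
      using pd meet_height_le[OF y] by (auto simp: meet_coords_def)
    define i0 where "i0 = snd x (fst y + 1)"
    have i0: "i0 \<in> {1..b}"
      using x \<open>fst y < fst x\<close> by (cases x) (auto simp: words_def i0_def)
    have "(\<Sum>i=1..b. V (meet_coords x (child y i)))
        = V (meet_coords x (child y i0)) + (\<Sum>i\<in>{1..b} - {i0}. V (meet_coords x (child y i)))"
      using i0 by (simp add: sum.remove)
    also have "\<dots> = V (p - 1, 0) + (\<Sum>i\<in>{1..b} - {i0}. V (p, 1))"
      using meet_coords_child[OF y] pd \<open>d = 0\<close> \<open>0 < p\<close> by (simp add: i0_def)
    also have "\<dots> = V (p - 1, 0) + (real b - 1) * V (p, 1)"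
      using i0 \<open>0 < b\<close> by (simp add: of_nat_diff)
    finally show ?thesis
      using meet_coords_parent[OF y] pd \<open>d = 0\<close> \<open>0 < p\<close>
      by (simp add: coord_op_def add_divide_distrib)
  qed
  then show ?thesis
    using next_expectation_kernel[of "\<lambda>z. V (meet_coords x z)"] assms(4) pd by simp
qed

section \<open>Potentials for the coordinate chain\<close>

definition visit_potential :: "nat \<Rightarrow> nat \<Rightarrow> nat \<Rightarrow> nat \<times> nat \<Rightarrow> real" where
  "visit_potential b p0 d0 = (\<lambda>(p, d).
     if p = p0 then 4 + 2 * real (min d d0) else if p < p0 then 4 else 4 / real b ^ (p - p0))"

definition depth_potential :: "nat \<Rightarrow> nat \<Rightarrow> nat \<times> nat \<Rightarrow> real" where
  "depth_potential b p0 = (\<lambda>(p, d).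
     if p = p0 then 1 + real d / 2 else if p < p0 then 1 else 1 / real b ^ (p - p0))"

lemma visit_potential_nonneg: "0 \<le> visit_potential b p0 d0 s"
  by (auto simp: visit_potential_def split: prod.splits)

lemma depth_potential_nonneg: "0 \<le> depth_potential b p0 s"
  by (auto simp: depth_potential_def split: prod.splits)

lemma coord_op_nonneg: "0 < b \<Longrightarrow> (\<And>s. 0 \<le> V s) \<Longrightarrow> 0 \<le> coord_op b V s"
  by (auto simp: coord_op_def split: prod.splits intro!: add_nonneg_nonneg divide_nonneg_nonneg mult_nonneg_nonneg)

lemma power_diff_Suc: "p0 < p \<Longrightarrow> (x :: real) ^ (Suc p - p0) = x * x ^ (p - p0)"
  by (simp add: Suc_diff_le)

lemma power_diff_pred: "Suc p0 < p \<Longrightarrow> (x :: real) ^ (p - p0) = x * x ^ (p - 1 - p0)"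
  by (metis Suc_diff_Suc diff_Suc_eq_diff_pred power_Suc Suc_lessD)

lemma coord_op_visit_potential:
  assumes "2 \<le> b"
  shows "coord_op b (visit_potential b p0 d0) s + (if s = (p0, d0) then 1 else 0) \<le> visit_potential b p0 d0 s"
proof -
  obtain p d where s: "s = (p, d)"
    by (cases s)
  have b: "2 \<le> real b"
    using assms by simp
  consider "0 < d" "p = p0" "d < d0" | "0 < d" "p = p0" "d0 \<le> d" | "0 < d" "p \<noteq> p0" | "d = 0" "p = 0"
    | "d = 0" "0 < p" "p < p0" | "d = 0" "0 < p" "p = p0" | "d = 0" "p = Suc p0" | "d = 0" "Suc p0 < p"
    by linarith
  then show ?thesis
  proof cases
    case 6
    then show ?thesis
      using s b by (cases "d0 = 0") (auto simp: coord_op_def visit_potential_def field_simps)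
  next
    case 8
    then show ?thesis
      using s b power_diff_Suc[of p0 p] power_diff_pred[of p0 p]
      by (auto simp: coord_op_def visit_potential_def field_simps)
  qed (use s b in \<open>auto simp: coord_op_def visit_potential_def min_def of_nat_diff field_simps
    power2_eq_square\<close>)
qed

lemma coord_op_depth_potential:
  assumes "2 \<le> b"
  shows "coord_op b (depth_potential b p0) s \<le> depth_potential b p0 s"
proof -
  obtain p d where s: "s = (p, d)"
    by (cases s)
  have b: "2 \<le> real b"
    using assms by simp
  consider "0 < d" | "d = 0" "p = 0" | "d = 0" "0 < p" "p \<le> p0" | "d = 0" "p = Suc p0" | "d = 0" "Suc p0 < p"
    by linarith
  then show ?thesis
  proof cases
    case 5
    then show ?thesis
      using s b power_diff_Suc[of p0 p] power_diff_pred[of p0 p]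
      by (auto simp: coord_op_def depth_potential_def field_simps)
  qed (use s b in \<open>auto simp: coord_op_def depth_potential_def of_nat_diff field_simps
    power2_eq_square\<close>)
qed

section \<open>Summability along the walk\<close>

lemma suminf_swap_ennreal: "(\<Sum>i. \<Sum>j. f i j) = (\<Sum>j. \<Sum>i. f i j :: ennreal)"
proof -
  have "(\<Sum>i. \<Sum>j. f i j) = (\<Sum>i. \<integral>\<^sup>+j. f i j \<partial>count_space UNIV)"
    by (simp add: nn_integral_count_space_nat)
  also have "\<dots> = (\<integral>\<^sup>+j. (\<Sum>i. f i j) \<partial>count_space UNIV)"
    by (rule nn_integral_suminf[symmetric]) simp
  also have "\<dots> = (\<Sum>j. \<Sum>i. f i j)"
    by (simp add: nn_integral_count_space_nat)
  finally show ?thesis .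
qed

lemma finite_if_suminf_indicator_ne_top:
  assumes "(\<Sum>n. indicator A n :: ennreal) \<noteq> \<top>"
  shows "finite (A :: nat set)"
proof -
  have "(\<Sum>n. indicator A n :: ennreal) = emeasure (count_space UNIV) A"
    by (simp add: nn_integral_count_space_nat[symmetric])
  with assms show ?thesis
    by (simp add: emeasure_count_space split: if_splits)
qed

lemma AE_ne_top_if_nn_integral_le:
  assumes "F \<in> borel_measurable M" and "integral\<^sup>N M F \<le> c" and "c \<noteq> \<top>"
  shows "AE \<omega> in M. F \<omega> \<noteq> \<top>"
proof -
  have "integral\<^sup>N M F \<noteq> \<top>"
    using assms(3,2) by (rule neq_top_trans)
  with assms(1) show ?thesis
    by (rule nn_integral_noteq_infinite[unfolded infinity_ennreal_def])
qed

definition depth_cutoff :: "real \<Rightarrow> nat" where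
  "depth_cutoff a = nat \<lceil>1 / sqrt a\<rceil>"

lemma real_depth_cutoff: "0 \<le> a \<Longrightarrow> real (depth_cutoff a) = of_int \<lceil>1 / sqrt a\<rceil>"
  by (simp add: depth_cutoff_def)

lemma mult_depth_cutoff_le:
  assumes "0 \<le> a" "a \<le> 1"
  shows "a * real (depth_cutoff a) \<le> 2 * sqrt a"
proof -
  have "real (depth_cutoff a) \<le> 1 / sqrt a + 1"
    unfolding real_depth_cutoff[OF assms(1)] by (rule of_int_ceiling_le_add_one)
  then have "a * real (depth_cutoff a) \<le> a * (1 / sqrt a + 1)"
    using assms(1) by (rule mult_left_mono)
  also have "\<dots> = sqrt a + a"
    using assms(1) by (cases "a = 0") (simp_all add: field_simps real_div_sqrt)
  also have "\<dots> \<le> 2 * sqrt a"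
  proof -
    have "a = sqrt a * sqrt a"
      using assms(1) by simp
    also have "\<dots> \<le> sqrt a * 1"
      using assms by (intro mult_left_mono) simp_all
    finally show ?thesis
      by simp
  qed
  finally show ?thesis .
qed

lemma two_div_depth_cutoff_le:
  assumes "0 < a"
  shows "2 / (real (depth_cutoff a) + 2) \<le> 2 * sqrt a"
proof -
  have "1 / sqrt a \<le> real (depth_cutoff a)"
    unfolding real_depth_cutoff[OF less_imp_le[OF assms]] by (rule le_of_int_ceiling)
  then have "1 \<le> sqrt a * real (depth_cutoff a)"
    using assms by (simp add: field_simps)
  moreover have "2 * sqrt a * (real (depth_cutoff a) + 2) = 2 * (sqrt a * real (depth_cutoff a)) + 4 * sqrt a"
    by (simp add: algebra_simps)
  ultimately have "2 \<le> 2 * sqrt a * (real (depth_cutoff a) + 2)"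
    using assms real_sqrt_ge_zero[of a] by linarith
  then show ?thesis
    by (simp add: divide_le_eq)
qed

definition shallow_weight :: "(nat \<Rightarrow> real) \<Rightarrow> nat \<times> nat \<Rightarrow> real" where
  "shallow_weight w = (\<lambda>(p, d). if d < depth_cutoff (w p) then w p else 0)"

lemma ennreal_shallow_weight:
  "ennreal (shallow_weight w s) = (\<Sum>p. \<Sum>d<depth_cutoff (w p). ennreal (w p) * indicator {(p, d)} s)"
proof -
  obtain p0 d0 where s: "s = (p0, d0)"
    by (cases s)
  have "(\<Sum>p. \<Sum>d<depth_cutoff (w p). ennreal (w p) * indicator {(p, d)} s)
      = (\<Sum>d<depth_cutoff (w p0). ennreal (w p0) * indicator {(p0, d)} s)"
    by (subst suminf_finite[of "{p0}"]) (auto simp: s)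
  also have "\<dots> = ennreal (shallow_weight w s)"
    by (simp add: s shallow_weight_def indicator_def)
  finally show ?thesis ..
qed

lemma suminf_shallow_weight:
  "(\<Sum>n. ennreal (shallow_weight w (s n)))
     = (\<Sum>p. \<Sum>d<depth_cutoff (w p). ennreal (w p) * (\<Sum>n. indicator {(p, d)} (s n)))"
proof -
  have "(\<Sum>n. ennreal (shallow_weight w (s n)))
      = (\<Sum>n. \<Sum>p. \<Sum>d<depth_cutoff (w p). ennreal (w p) * indicator {(p, d)} (s n))"
    by (simp add: ennreal_shallow_weight)
  also have "\<dots> = (\<Sum>p. \<Sum>n. \<Sum>d<depth_cutoff (w p). ennreal (w p) * indicator {(p, d)} (s n))"
    by (rule suminf_swap_ennreal)
  also have "\<dots> = (\<Sum>p. \<Sum>d<depth_cutoff (w p). \<Sum>n. ennreal (w p) * indicator {(p, d)} (s n))"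
    by (intro suminf_cong suminf_sum summableI)
  finally show ?thesis
    by (simp only: ennreal_suminf_cmult)
qed

lemma summable_weight_levels:
  fixes level depth :: "nat \<Rightarrow> nat" and w :: "nat \<Rightarrow> real"
  assumes w: "\<And>p. 0 \<le> w p"
    and shallow: "summable (\<lambda>n. shallow_weight w (level n, depth n))"
    and deep: "finite {p. 0 < w p \<and> (\<exists>n. level n = p \<and> depth_cutoff (w p) \<le> depth n)}"
    and levels: "\<And>p. finite {n. level n = p}"
  shows "summable (\<lambda>n. w (level n))"
proof -
  let ?deep = "{p. 0 < w p \<and> (\<exists>n. level n = p \<and> depth_cutoff (w p) \<le> depth n)}"
  have "{n. w (level n) \<noteq> shallow_weight w (level n, depth n)} \<subseteq> (\<Union>p\<in>?deep. {n. level n = p})"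
  proof
    fix n assume "n \<in> {n. w (level n) \<noteq> shallow_weight w (level n, depth n)}"
    then have "depth_cutoff (w (level n)) \<le> depth n" "0 < w (level n)"
      using w[of "level n"] by (auto simp: shallow_weight_def split: if_splits)
    then show "n \<in> (\<Union>p\<in>?deep. {n. level n = p})"
      by (intro UN_I[of "level n"]) auto
  qed
  moreover have "finite (\<Union>p\<in>?deep. {n. level n = p})"
    using deep levels by blast
  ultimately have "eventually (\<lambda>n. w (level n) = shallow_weight w (level n, depth n)) sequentially"
    unfolding cofinite_eq_sequentially[symmetric] eventually_cofinite by (blast intro: finite_subset)
  with shallow show ?thesis
    by (simp add: summable_cong)
qed

locale tree_walk =
  fixes b :: nat and root :: word and M :: "'s measure" and Y :: "nat \<Rightarrow> 's \<Rightarrow> word"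
  assumes two_le_b: "2 \<le> b" and root_words: "root \<in> words b"
    and markov: "markov_chain M Y (kernel b) root"
begin

sublocale locally_finite_chain M Y "kernel b" root "neighbours b"
  using markov two_le_b by unfold_locales (simp_all add: finite_neighbours kernel_nonneg sum_kernel_neighbours)

abbreviation coords :: "word \<Rightarrow> nat \<times> nat" where
  "coords \<equiv> meet_coords root"

lemma coords_root: "coords root = (0, 0)"
proof -
  have "meet_height root root = fst root"
    by (rule meet_height_eqI) (auto simp: agree_upto_def)
  then show ?thesis
    by (simp add: meet_coords_def)
qed

lemma AE_tail_equiv: "AE \<omega> in M. \<forall>n. Y n \<omega> \<in> {y. tail_equiv root y}"
proof (rule AE_invariant)
  show "root \<in> {y. tail_equiv root y}"
    by (simp add: tail_equiv_def)
next
  fix x assume "x \<in> {y. tail_equiv root y}"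
  then show "neighbours b x \<subseteq> {y. tail_equiv root y}"
    by (auto simp: neighbours_def tail_equiv_parent tail_equiv_child)
qed

lemma next_expectation_coords:
  "tail_equiv root x \<Longrightarrow> (\<And>s. 0 \<le> V s) \<Longrightarrow>
    next_expectation (kernel b) (neighbours b) (\<lambda>y. ennreal (V (coords y))) x = ennreal (coord_op b V (coords x))"
  using two_le_b root_words by (intro next_expectation_meet_coords) simp_all

lemma borel_measurable_visits [measurable]:
  "(\<lambda>\<omega>. \<Sum>n. indicator A (coords (Y n \<omega>)) :: ennreal) \<in> borel_measurable M"
  by (intro borel_measurable_suminf_order borel_measurable_comp_Y)

lemma nn_integral_visits_le_4:
  "(\<integral>\<^sup>+\<omega>. (\<Sum>n. indicator {s} (coords (Y n \<omega>))) \<partial>M) \<le> 4"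
proof -
  obtain p0 d0 where s: "s = (p0, d0)"
    by (cases s)
  let ?V = "\<lambda>y. ennreal (visit_potential b p0 d0 (coords y))"
  have "(\<integral>\<^sup>+\<omega>. (\<Sum>n. indicator {s} (coords (Y n \<omega>))) \<partial>M) \<le> ?V root"
  proof (rule nn_integral_suminf_le_Lyapunov[OF AE_tail_equiv, where V = ?V])
    fix x assume "x \<in> {y. tail_equiv root y}"
    then have "next_expectation (kernel b) (neighbours b) ?V x + indicator {s} (coords x)
        = ennreal (coord_op b (visit_potential b p0 d0) (coords x) + (if coords x = (p0, d0) then 1 else 0))"
      using coord_op_nonneg[of b "visit_potential b p0 d0"] two_le_b
      by (simp add: next_expectation_coords visit_potential_nonneg indicator_def s ennreal_plus)
    also have "\<dots> \<le> ?V x"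
      using two_le_b by (intro ennreal_leI coord_op_visit_potential)
    finally show "next_expectation (kernel b) (neighbours b) ?V x + indicator {s} (coords x) \<le> ?V x" .
  qed
  also have "?V root = 4"
    by (simp add: coords_root visit_potential_def)
  finally show ?thesis .
qed

lemma emeasure_reach_depth_le:
  "emeasure M {\<omega> \<in> space M. \<exists>n. Y n \<omega> \<in> {y. fst (coords y) = p0 \<and> dd \<le> snd (coords y)}}
     \<le> ennreal (2 / (real dd + 2))"
proof -
  define c where "c = 2 / (real dd + 2)"
  let ?h = "\<lambda>y. ennreal c * ennreal (depth_potential b p0 (coords y))"
  have "emeasure M {\<omega> \<in> space M. \<exists>n. Y n \<omega> \<in> {y. fst (coords y) = p0 \<and> dd \<le> snd (coords y)}} \<le> ?h root"
  proof (rule emeasure_hitting_le[OF AE_tail_equiv, where h = ?h])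
    fix x assume "x \<in> {y. tail_equiv root y}"
    then show "next_expectation (kernel b) (neighbours b) ?h x \<le> ?h x"
      using coord_op_depth_potential[OF two_le_b]
      by (simp add: next_expectation_cmult next_expectation_coords depth_potential_nonneg
          ennreal_leI mult_left_mono)
  next
    fix x assume "x \<in> {y. fst (coords y) = p0 \<and> dd \<le> snd (coords y)}"
    then obtain d where d: "coords x = (p0, d)" "dd \<le> d"
      by (cases "coords x") auto
    then have "1 \<le> c * depth_potential b p0 (coords x)"
      by (simp add: c_def depth_potential_def field_simps)
    then show "1 \<le> ?h x"
      by (simp add: ennreal_mult[symmetric] c_def depth_potential_nonneg)
  qed
  also have "?h root = ennreal c"
    by (simp add: coords_root depth_potential_def)
  finally show ?thesis
    by (simp add: c_def)
qed

lemma AE_depth_bounded: "AE \<omega> in M. \<forall>p. \<exists>D. \<forall>n. fst (coords (Y n \<omega>)) = p \<longrightarrow> snd (coords (Y n \<omega>)) < D"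
  unfolding AE_all_countable
proof
  fix p
  define reach where
    "reach dd = {\<omega> \<in> space M. \<exists>n. Y n \<omega> \<in> {y. fst (coords y) = p \<and> dd \<le> snd (coords y)}}" for dd
  have [measurable]: "reach dd \<in> sets M" for dd
    unfolding reach_def by measurable
  have "measure M (\<Inter>dd. reach dd) \<le> 2 / (real dd + 2)" for dd
  proof -
    have "emeasure M (\<Inter>dd. reach dd) \<le> emeasure M (reach dd)"
      by (rule emeasure_mono) auto
    also have "\<dots> \<le> ennreal (2 / (real dd + 2))"
      unfolding reach_def by (rule emeasure_reach_depth_le)
    finally show ?thesis
      by (simp add: emeasure_eq_measure)
  qed
  moreover have "(\<lambda>dd. 2 / (real dd + 2)) \<longlonglongrightarrow> 0"
    using LIMSEQ_ignore_initial_segment[OF lim_const_over_n[of 2], of 2] by (simp add: add.commute)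
  ultimately have "measure M (\<Inter>dd. reach dd) \<le> 0"
    by (intro LIMSEQ_le_const) auto
  then have "(\<Inter>dd. reach dd) \<in> null_sets M"
    by (simp add: null_sets_def emeasure_eq_measure measure_le_0_iff)
  then show "AE \<omega> in M. \<exists>D. \<forall>n. fst (coords (Y n \<omega>)) = p \<longrightarrow> snd (coords (Y n \<omega>)) < D"
    by (rule AE_I') (auto simp: reach_def not_less)
qed

lemma AE_finite_levels: "AE \<omega> in M. \<forall>p. finite {n. fst (coords (Y n \<omega>)) = p}"
proof -
  have visits_finite: "AE \<omega> in M. (\<Sum>n. indicator {s} (coords (Y n \<omega>))) \<noteq> (\<top> :: ennreal)" for s
  proof (rule AE_ne_top_if_nn_integral_le)
    show "(\<integral>\<^sup>+\<omega>. (\<Sum>n. indicator {s} (coords (Y n \<omega>))) \<partial>M) \<le> 4"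
      by (rule nn_integral_visits_le_4)
  qed (simp_all add: ennreal_numeral_less_top[THEN less_imp_neq])
  have "AE \<omega> in M. finite {n. coords (Y n \<omega>) = s}" for s
    using visits_finite[of s]
  proof eventually_elim
    case (elim \<omega>)
    show ?case
      by (rule finite_if_suminf_indicator_ne_top) (use elim in \<open>simp add: indicator_def\<close>)
  qed
  then have "AE \<omega> in M. \<forall>s. finite {n. coords (Y n \<omega>) = s}"
    by (simp add: AE_all_countable)
  with AE_depth_bounded show ?thesis
  proof eventually_elim
    case (elim \<omega>)
    show ?case
    proof
      fix p
      obtain D where "\<forall>n. fst (coords (Y n \<omega>)) = p \<longrightarrow> snd (coords (Y n \<omega>)) < D"
        using elim(1) by blast
      then have "{n. fst (coords (Y n \<omega>)) = p} \<subseteq> (\<Union>d<D. {n. coords (Y n \<omega>) = (p, d)})"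
        by (auto simp: prod_eq_iff)
      with elim(2) show "finite {n. fst (coords (Y n \<omega>)) = p}"
        by (meson finite_UN_I finite_lessThan finite_subset)
    qed
  qed
qed

lemma AE_summable_shallow_weight:
  fixes w :: "nat \<Rightarrow> real"
  assumes w: "\<And>p. 0 \<le> w p" "\<And>p. w p \<le> 1" and summable_sqrt: "summable (\<lambda>p. sqrt (w p))"
  shows "AE \<omega> in M. summable (\<lambda>n. shallow_weight w (coords (Y n \<omega>)))"
proof -
  have "(\<integral>\<^sup>+\<omega>. (\<Sum>n. ennreal (shallow_weight w (coords (Y n \<omega>)))) \<partial>M)
      = (\<integral>\<^sup>+\<omega>. (\<Sum>p. \<Sum>d<depth_cutoff (w p).
           ennreal (w p) * (\<Sum>n. indicator {(p, d)} (coords (Y n \<omega>)))) \<partial>M)"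
    by (simp only: suminf_shallow_weight)
  also have "\<dots> = (\<Sum>p. \<Sum>d<depth_cutoff (w p).
      ennreal (w p) * (\<integral>\<^sup>+\<omega>. (\<Sum>n. indicator {(p, d)} (coords (Y n \<omega>))) \<partial>M))"
    by (subst nn_integral_suminf, measurable)
      (intro suminf_cong, subst nn_integral_sum, measurable, simp add: nn_integral_cmult)
  also have "\<dots> \<le> (\<Sum>p. ennreal (8 * sqrt (w p)))"
  proof (intro suminf_le summableI)
    fix p
    have "(\<Sum>d<depth_cutoff (w p). ennreal (w p) * (\<integral>\<^sup>+\<omega>. (\<Sum>n. indicator {(p, d)} (coords (Y n \<omega>))) \<partial>M))
        \<le> (\<Sum>d<depth_cutoff (w p). ennreal (w p) * 4)"
      by (intro sum_mono mult_left_mono nn_integral_visits_le_4) simp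
    also have "\<dots> = ennreal (4 * (w p * real (depth_cutoff (w p))))"
      using w by (simp add: ennreal_mult ennreal_of_nat_eq_real_of_nat mult_ac)
    also have "\<dots> \<le> ennreal (8 * sqrt (w p))"
      using mult_depth_cutoff_le[OF w] by (intro ennreal_leI) simp
    finally show "(\<Sum>d<depth_cutoff (w p).
        ennreal (w p) * (\<integral>\<^sup>+\<omega>. (\<Sum>n. indicator {(p, d)} (coords (Y n \<omega>))) \<partial>M)) \<le> ennreal (8 * sqrt (w p))" .
  qed
  finally have "(\<integral>\<^sup>+\<omega>. (\<Sum>n. ennreal (shallow_weight w (coords (Y n \<omega>)))) \<partial>M)
      \<le> (\<Sum>p. ennreal (8 * sqrt (w p)))" .
  moreover have "(\<Sum>p. ennreal (8 * sqrt (w p))) \<noteq> \<top>"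
    using summable_sqrt w by (intro ennreal_suminf_neq_top summable_mult) simp_all
  ultimately have "AE \<omega> in M. (\<Sum>n. ennreal (shallow_weight w (coords (Y n \<omega>)))) \<noteq> \<top>"
    by (intro AE_ne_top_if_nn_integral_le) simp_all
  then show ?thesis
  proof eventually_elim
    case (elim \<omega>)
    show ?case
      by (rule summable_suminf_not_top[OF _ elim]) (simp add: shallow_weight_def w split: prod.splits)
  qed
qed

lemma AE_finite_deep_levels:
  fixes w :: "nat \<Rightarrow> real"
  assumes w: "\<And>p. 0 \<le> w p" and summable_sqrt: "summable (\<lambda>p. sqrt (w p))"
  shows "AE \<omega> in M. finite
    {p. 0 < w p \<and> (\<exists>n. fst (coords (Y n \<omega>)) = p \<and> depth_cutoff (w p) \<le> snd (coords (Y n \<omega>)))}"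
proof -
  define reach where "reach p =
    {\<omega> \<in> space M. \<exists>n. Y n \<omega> \<in> {y. fst (coords y) = p \<and> depth_cutoff (w p) \<le> snd (coords y)}}" for p
  have [measurable]: "reach p \<in> sets M" for p
    unfolding reach_def by measurable
  define deep where "deep \<omega> = (\<Sum>p. indicator {p. 0 < w p \<and> \<omega> \<in> reach p} p :: ennreal)" for \<omega>
  have deep_eq: "deep \<omega> = (\<Sum>p. (if 0 < w p then 1 else 0) * indicator (reach p) \<omega>)" for \<omega>
    unfolding deep_def by (intro suminf_cong) (simp add: indicator_def)
  have [measurable]: "deep \<in> borel_measurable M"
    unfolding deep_eq by measurable
  have "integral\<^sup>N M deep = (\<Sum>p. (if 0 < w p then 1 else 0) * emeasure M (reach p))"
    unfolding deep_eq by (simp add: nn_integral_suminf nn_integral_cmult_indicator)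
  also have "\<dots> \<le> (\<Sum>p. ennreal (2 * sqrt (w p)))"
  proof (intro suminf_le summableI)
    fix p
    show "(if 0 < w p then 1 else 0) * emeasure M (reach p) \<le> ennreal (2 * sqrt (w p))"
    proof (cases "0 < w p")
      case True
      have "emeasure M (reach p) \<le> ennreal (2 / (real (depth_cutoff (w p)) + 2))"
        unfolding reach_def by (rule emeasure_reach_depth_le)
      also have "\<dots> \<le> ennreal (2 * sqrt (w p))"
        using two_div_depth_cutoff_le[OF True] by (rule ennreal_leI)
      finally show ?thesis
        using True by simp
    qed simp
  qed
  finally have "integral\<^sup>N M deep \<le> (\<Sum>p. ennreal (2 * sqrt (w p)))" .
  moreover have "(\<Sum>p. ennreal (2 * sqrt (w p))) \<noteq> \<top>"
    using summable_sqrt w by (intro ennreal_suminf_neq_top summable_mult) simp_all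
  ultimately have "AE \<omega> in M. deep \<omega> \<noteq> \<top>"
    by (intro AE_ne_top_if_nn_integral_le) simp_all
  then show ?thesis
    using AE_space
  proof eventually_elim
    case (elim \<omega>)
    have "finite {p. 0 < w p \<and> \<omega> \<in> reach p}"
      using elim(1) unfolding deep_def by (rule finite_if_suminf_indicator_ne_top)
    then show ?case
      using elim(2) by (simp add: reach_def)
  qed
qed

end

theorem proposition3p13:
  fixes b :: nat and root :: word and M :: "'s measure" and Y :: "nat \<Rightarrow> 's \<Rightarrow> word"
    and f :: "real \<Rightarrow> real"
  assumes "b \<ge> 2"
    and "root \<in> words b" and "height root = 0"
    and "markov_chain M Y (kernel b) root"
    and "\<forall>x\<ge>0. 0 \<le> f x \<and> f x \<le> 1"
    and "summable (\<lambda>p::nat. sqrt (f (real p)))"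
  shows "AE \<omega> in M. summable (\<lambda>n. f (- real_of_int (meet_height root (Y n \<omega>))))"
proof -
  interpret tree_walk b root M Y
    using assms(1,2,4) by unfold_locales
  define w where "w p = f (real p)" for p :: nat
  have w: "0 \<le> w p" "w p \<le> 1" for p
    using assms(5) by (auto simp: w_def)
  have summable_sqrt: "summable (\<lambda>p. sqrt (w p))"
    using assms(6) by (simp add: w_def)
  show ?thesis
    using AE_tail_equiv AE_finite_levels AE_summable_shallow_weight[OF w summable_sqrt]
      AE_finite_deep_levels[OF w(1) summable_sqrt]
  proof eventually_elim
    case (elim \<omega>)
    have "summable (\<lambda>n. w (fst (coords (Y n \<omega>))))"
      by (rule summable_weight_levels[where depth = "\<lambda>n. snd (coords (Y n \<omega>))"]) (use elim w in simp_all)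
    moreover have "f (- real_of_int (meet_height root (Y n \<omega>))) = w (fst (coords (Y n \<omega>)))" for n
      using meet_height_le[of root "Y n \<omega>"] elim(1) assms(3)
      by (simp add: w_def meet_coords_def height_def)
    ultimately show ?case
      by simp
  qed
qed

end
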